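(* Consider the algorithm described in the context, and suppose it does not terminate finitely. Then for all $k\in\mathbb{N}$, $$g_k^Ts_k+\frac{\bar\sigma_u\|s_k\|_2^2}{\alpha_k}+r(x_k+s_k)-r_k\le(\kappa_{\nabla f}+\kappa_{\partial r})\|v_k\|_2+\frac{\bar\sigma_u\|v_k\|_2^2}{\alpha_k}.$$
   Context: Problem: $\min_{x\in\mathbb{R}^n} f(x)+r(x)$ subject to $c(x)=0$, where $f:\mathbb{R}^n\to\mathbb{R}$ and $c:\mathbb{R}^n\to\mathbb{R}^m$ ($m\le n$) are continuously differentiable and $r:\mathbb{R}^n\to\mathbb{R}_{\ge 0}$ is convex. Write $g(x)=\nabla f(x)$, $J(x)=\nabla c(x)^T$, and $f_k=f(x_k)$, $g_k=g(x_k)$, $c_k=c(x_k)$, $J_k=J(x_k)$, $r_k=r(x_k)$. All norms are Euclidean. Merit function: $\Phi_\tau(x)=\tau(f(x)+r(x))+\|c(x)\|_2$. Algorithm: inputs $x_0$, $\alpha_0>0$, $\tau_{-1}>0$; constants $\kappa_v>0$, $\sigma_c,\epsilon_\tau,\xi,\eta\in(0,1)$, $\sigma_u\in(0,1/2]$, $\bar\sigma_u:=\sigma_u+\tfrac12$. For $k=0,1,\dots$: 1. If $J_k^Tc_k\ne0$, compute $v_k$ with $v_k\in\mathrm{Range}(J_k^T)$, $\|v_k\|_2\le\kappa_v\alpha_k\|J_k^Tc_k\|_2$, $\|c_k+J_kv_k\|_2\le\|c_k+J_kv_k^c\|_2$, where $v_k^c=-\beta_k^cJ_k^Tc_k$ with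 $\beta_k^c$ minimizing $\tfrac12\|c_k-\beta J_kJ_k^Tc_k\|_2^2$ over $0\le\beta\le\kappa_v\alpha_k$. Otherwise set $v_k=0$, and if $c_k\ne0$ terminate. 2. Let $u_k$ be the unique minimizer of $g_k^Tu+\tfrac1{2\alpha_k}\|u\|_2^2+r(x_k+v_k+u)$ subject to $J_ku=0$; set $s_k=v_k+u_k$. If $s_k=0$, terminate. 3. Let $D_k:=g_k^Ts_k+\bar\sigma_u\|s_k\|_2^2/\alpha_k+r(x_k+s_k)-r_k$; $\tau_{k,\mathrm{trial}}=\infty$ if $D_k\le0$, else $\tau_{k,\mathrm{trial}}=(1-\sigma_c)(\|c_k\|_2-\|c_k+J_kv_k\|_2)/D_k$. Set $\tau_k=\tau_{k-1}$ if $\tau_{k-1}\le\tau_{k,\mathrm{trial}}$, else $\tau_k=\min\{(1-\epsilon_\tau)\tau_{k-1},\tau_{k,\mathrm{trial}}\}$. 4. With $\Delta q_k(s,\tau):=-\tau(g_k^Ts+\tfrac1{2\alpha_k}\|s\|_2^2+r(x_k+s)-r_k)+\|c_k\|_2-\|c_k+J_ks\|_2$: if $\Phi_{\tau_k}(x_k+s_k)\le\Phi_{\tau_k}(x_k)-\eta\Delta q_k(s_k,\tau_k)$ set $x_{k+1}=x_k+s_k$, $\alpha_{k+1}=\alpha_k$; else $x_{k+1}=x_k$, $\alpha_{k+1}=\xi\alpha_k$. Standing assumption: there is an open convex set $\mathcal X$ containing all iterates $x_k$ and trial points $x_k+s_k$ such that $f$ is bounded below on $\mathcal X$, $\|\nabla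 f(x)\|_2\le\kappa_{\nabla f}$ for $x\in\mathcal X$ and $\nabla f$ is Lipschitz on $\mathcal X$, $c$ and $J$ are bounded on $\mathcal X$ and $J$ is Lipschitz on $\mathcal X$, and every subgradient $w\in\partial r(x)$ with $x\in\mathcal X$ satisfies $\|w\|_2\le\kappa_{\partial r}$ (constants $\kappa_{\nabla f},\kappa_{\partial r}>0$). *)

theory Defs
  imports "HOL-Analysis.Analysis"
begin

definition subdiff :: "('a::real_inner \<Rightarrow> real) \<Rightarrow> 'a \<Rightarrow> 'a set" where
  "subdiff r x = {w. \<forall>y. r y \<ge> r x + inner w (y - x)}"

definition merit :: "('n \<Rightarrow> real) \<Rightarrow> ('n \<Rightarrow> real) \<Rightarrow> ('n \<Rightarrow> 'm::real_normed_vector)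
      \<Rightarrow> real \<Rightarrow> 'n \<Rightarrow> real" where
  "merit f r c \<tau> x = \<tau> * (f x + r x) + norm (c x)"

definition model_red :: "(real^'n::finite \<Rightarrow> real) \<Rightarrow> real^'n \<Rightarrow> real^'n \<Rightarrow> real^'m::finite
      \<Rightarrow> real^'n^'m \<Rightarrow> real \<Rightarrow> real^'n \<Rightarrow> real \<Rightarrow> real" where
  "model_red r xk gk ck Jk \<alpha> s \<tau> =
     - \<tau> * (inner gk s + (1 / (2 * \<alpha>)) * (norm s)\<^sup>2 + r (xk + s) - r xk)
     + norm ck - norm (ck + Jk *v s)"

end

theory Submission
  imports Defs
begin

(* The optimality of u_k over the null space of J_k, compared against the feasible
   points (1 - t) u_k, together with convexity of r along the segment from x_k + s_k to x_k,
   yields  g_k^T u_k + |u_k|^2/alpha_k + r(x_k + s_k) - r_k <= kappa_r |v_k|  in the limit t -> 0;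
   the subgradient bound enters through the Lipschitz-type estimate of r near x_k + s_k, which
   lies in the open set X.  Since v_k lies in the range of J_k^T it is orthogonal to u_k, so
   |s_k|^2 = |v_k|^2 + |u_k|^2, and the term g_k^T v_k is bounded by Cauchy-Schwarz. *)

lemma convex_on_subdiff_nonempty:
  fixes r :: "'a::euclidean_space \<Rightarrow> real"
  assumes cv: "convex_on UNIV r"
  shows "subdiff r p \<noteq> {}"
proof -
  define S :: "('a \<times> real) set" where "S = {(p, r p)}"
  define T :: "('a \<times> real) set" where "T = {z. snd z > r (fst z)}"
  have "convex T"
    unfolding convex_def T_def
  proof (intro ballI allI impI, clarsimp)
    fix y1 t1 y2 t2 and a b :: real
    assume h: "r y1 < t1" "r y2 < t2" "0 \<le> a" "0 \<le> b" "a + b = 1"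
    have "r (a *\<^sub>R y1 + b *\<^sub>R y2) \<le> a * r y1 + b * r y2"
      using convex_onD[OF cv, of b y1 y2] h by (simp add: eq_diff_eq[symmetric])
    also have "\<dots> < a * t1 + b * t2"
      using h by (cases "a = 0") (auto intro!: add_less_le_mono mult_strict_left_mono mult_left_mono)
    finally show "r (a *\<^sub>R y1 + b *\<^sub>R y2) < a * t1 + b * t2" .
  qed
  moreover have "(p, r p + 1) \<in> T" "convex S" "S \<noteq> {}" "S \<inter> T = {}"
    unfolding S_def T_def by auto
  ultimately obtain a b where ab: "a \<noteq> 0" "\<forall>z\<in>S. inner a z \<le> b" "\<forall>z\<in>T. inner a z \<ge> b"
    using separating_hyperplane_sets[of S T] by blast
  obtain a1 a0 where a: "a = (a1, a0)" by (cases a)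
  have above: "inner a1 y + a0 * t \<ge> b" if "t > r y" for y t
    using ab(3) that unfolding T_def a by (auto simp: inner_Pair)
  have at_p: "inner a1 p + a0 * r p \<le> b"
    using ab(2) unfolding S_def a by (auto simp: inner_Pair)
  have "a0 \<ge> 0"
    using above[of p "r p + 1"] at_p by (simp add: algebra_simps)
  moreover have "a0 \<noteq> 0"
  proof
    assume "a0 = 0"
    moreover from this have "a1 \<noteq> 0" using ab(1) a by (auto simp: zero_prod_def)
    moreover have "inner a1 a1 \<le> 0"
      using above[of "p - a1" "r (p - a1) + 1"] at_p \<open>a0 = 0\<close> by (simp add: inner_diff_right)
    ultimately show False by (metis inner_gt_zero_iff not_le)
  qed
  ultimately have a0: "a0 > 0" by simp
  have supp: "inner a1 y + a0 * r y \<ge> inner a1 p + a0 * r p" for y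
  proof (rule ccontr)
    define d where "d = inner a1 p + a0 * r p - (inner a1 y + a0 * r y)"
    assume "\<not> ?thesis"
    then have "d > 0" using d_def by simp
    then have "b \<le> inner a1 y + a0 * (r y + d / (2 * a0))"
      using above a0 by simp
    also have "\<dots> = inner a1 p + a0 * r p - d / 2"
      using a0 by (simp add: d_def field_simps)
    finally show False using at_p \<open>d > 0\<close> by linarith
  qed
  have "- (1 / a0) *\<^sub>R a1 \<in> subdiff r p"
    unfolding subdiff_def
  proof (intro CollectI allI)
    fix y
    have "a0 * (r p + inner (- (1 / a0) *\<^sub>R a1) (y - p)) \<le> a0 * r y"
      using supp[of y] a0 by (simp add: algebra_simps inner_diff_right)
    then show "r p + inner (- (1 / a0) *\<^sub>R a1) (y - p) \<le> r y"
      using a0 by simp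
  qed
  then show ?thesis by blast
qed

lemma convex_on_le_of_subdiff_bounded:
  fixes r :: "'a::euclidean_space \<Rightarrow> real"
  assumes "convex_on UNIV r" and "\<And>w. w \<in> subdiff r y \<Longrightarrow> norm w \<le> \<kappa>"
  shows "r y \<le> r z + \<kappa> * norm (y - z)"
proof -
  obtain w where w: "w \<in> subdiff r y"
    using convex_on_subdiff_nonempty[OF assms(1)] by blast
  have "inner w (y - z) \<le> \<kappa> * norm (y - z)"
    using norm_cauchy_schwarz[of w "y - z"] assms(2)[OF w]
    by (meson mult_right_mono norm_ge_zero order_trans)
  moreover have "r z \<ge> r y + inner w (z - y)"
    using w unfolding subdiff_def by blast
  ultimately show ?thesis
    by (smt (verit) inner_minus_right minus_diff_eq)
qed

lemma le_of_forall_small_pos: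
  fixes A B K \<delta> :: real
  assumes "\<delta> > 0" and "\<And>t. 0 < t \<Longrightarrow> t < \<delta> \<Longrightarrow> A - t * B \<le> K"
  shows "A \<le> K"
proof (rule tendsto_upperbound)
  show "((\<lambda>t. A - t * B) \<longlongrightarrow> A) (at_right 0)"
    by (auto intro!: tendsto_eq_intros)
  show "\<forall>\<^sub>F t in at_right 0. A - t * B \<le> K"
    using eventually_at_right_real[OF assms(1)] by eventually_elim (use assms(2) in auto)
qed simp

definition is_prox_minimizer :: "'a::real_inner set \<Rightarrow> 'a \<Rightarrow> real \<Rightarrow> ('a \<Rightarrow> real) \<Rightarrow> 'a \<Rightarrow> 'a \<Rightarrow> bool"
  where "is_prox_minimizer S g \<alpha> r z u \<longleftrightarrow> u \<in> S \<and>
    (\<forall>w\<in>S. inner g u + (1 / (2 * \<alpha>)) * (norm u)\<^sup>2 + r (z + u)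
            \<le> inner g w + (1 / (2 * \<alpha>)) * (norm w)\<^sup>2 + r (z + w))"

lemma prox_subspace_decrease:
  fixes r :: "'a::euclidean_space \<Rightarrow> real"
  assumes cv: "convex_on UNIV r" and "open X" and xs: "x + v + u \<in> X" and \<alpha>: "\<alpha> > 0"
    and S: "subspace S" and u: "is_prox_minimizer S g \<alpha> r (x + v) u"
    and subgrad: "\<And>y w. y \<in> X \<Longrightarrow> w \<in> subdiff r y \<Longrightarrow> norm w \<le> \<kappa>"
  shows "inner g u + (norm u)\<^sup>2 / \<alpha> + r (x + v + u) - r x \<le> \<kappa> * norm v"
proof -
  obtain e where e: "e > 0" "ball (x + v + u) e \<subseteq> X"
    using \<open>open X\<close> xs open_contains_ball by blast
  define a b r1 where "a = inner g u" and "b = (norm u)\<^sup>2 / \<alpha>" and "r1 = r (x + v + u)"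
  have "a + b + r1 - r x \<le> \<kappa> * norm v"
  proof (rule le_of_forall_small_pos[where \<delta> = "min 1 (e / (norm u + 1))" and B = "b / 2"])
    fix t assume t: "0 < t" "t < min 1 (e / (norm u + 1))"
    moreover have "norm u + 1 > 0"
      by (simp add: add_nonneg_pos)
    ultimately have "t * (norm u + 1) < e"
      by (simp add: less_divide_eq)
    then have "t * norm u < e" using t by (simp add: algebra_simps)
    define q where "q = x + v + (1 - t) *\<^sub>R u"
    have "dist (x + v + u) q = t * norm u"
      using t by (simp add: q_def dist_norm algebra_simps)
    then have "q \<in> X" using e \<open>t * norm u < e\<close> by auto
    have "q - t *\<^sub>R v = (1 - t) *\<^sub>R (x + v + u) + t *\<^sub>R x"
      by (simp add: q_def algebra_simps)
    then have r_segment: "r (q - t *\<^sub>R v) \<le> (1 - t) * r1 + t * r x"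
      using convex_onD[OF cv, of t "x + v + u" x] t by (simp add: r1_def)
    have "\<And>w. w \<in> subdiff r q \<Longrightarrow> norm w \<le> \<kappa>"
      using subgrad \<open>q \<in> X\<close> by blast
    from convex_on_le_of_subdiff_bounded[OF cv this, where y = q and z = "q - t *\<^sub>R v"]
    have r_q: "r q \<le> r (q - t *\<^sub>R v) + \<kappa> * (t * norm v)"
      using t by simp
    have "(1 - t) *\<^sub>R u \<in> S" using S u by (simp add: is_prox_minimizer_def subspace_scale)
    with u have "inner g u + (1 / (2 * \<alpha>)) * (norm u)\<^sup>2 + r (x + v + u)
        \<le> inner g ((1 - t) *\<^sub>R u) + (1 / (2 * \<alpha>)) * (norm ((1 - t) *\<^sub>R u))\<^sup>2 + r q"
      unfolding is_prox_minimizer_def q_def add.assoc by blast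
    then have "a + b / 2 + r1 \<le> (1 - t) * a + (1 - t)\<^sup>2 * (b / 2) + r q"
      using t by (simp add: a_def b_def r1_def power_mult_distrib)
    with r_segment r_q have "t * (a + b - t * (b / 2) + r1 - r x) \<le> t * (\<kappa> * norm v)"
      by (simp add: field_simps power2_eq_square)
    then show "a + b + r1 - r x - t * (b / 2) \<le> \<kappa> * norm v"
      using t by simp
  qed (use e in \<open>simp add: add_nonneg_pos\<close>)
  then show ?thesis by (simp add: a_def b_def r1_def)
qed

lemma prox_step_bound:
  fixes r :: "'a::euclidean_space \<Rightarrow> real"
  assumes cv: "convex_on UNIV r" and X: "open X" and xs: "x + (v + u) \<in> X" and \<alpha>: "\<alpha> > 0"
    and S: "subspace S" and u: "is_prox_minimizer S g \<alpha> r (x + v) u"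
    and subgrad: "\<And>y w. y \<in> X \<Longrightarrow> w \<in> subdiff r y \<Longrightarrow> norm w \<le> \<kappa>r"
    and orth: "inner v u = 0" and g: "norm g \<le> \<kappa>f" and \<sigma>: "\<sigma> \<le> 1"
  shows "inner g (v + u) + \<sigma> * (norm (v + u))\<^sup>2 / \<alpha> + r (x + (v + u)) - r x
         \<le> (\<kappa>f + \<kappa>r) * norm v + \<sigma> * (norm v)\<^sup>2 / \<alpha>"
proof -
  have decrease: "inner g u + (norm u)\<^sup>2 / \<alpha> + r (x + v + u) - r x \<le> \<kappa>r * norm v"
    using prox_subspace_decrease[OF cv X _ \<alpha> S u subgrad] xs by (simp add: add.assoc)
  have "(norm (v + u))\<^sup>2 = (norm v)\<^sup>2 + (norm u)\<^sup>2"
    using orth by (simp add: power2_norm_eq_inner inner_add_left inner_add_right inner_commute)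
  then have pythagoras: "\<sigma> * (norm (v + u))\<^sup>2 / \<alpha> = \<sigma> * (norm v)\<^sup>2 / \<alpha> + \<sigma> * ((norm u)\<^sup>2 / \<alpha>)"
    by (simp add: algebra_simps add_divide_distrib)
  have "\<sigma> * ((norm u)\<^sup>2 / \<alpha>) \<le> (norm u)\<^sup>2 / \<alpha>"
    using mult_right_mono[OF \<sigma>, of "(norm u)\<^sup>2 / \<alpha>"] \<alpha> by simp
  moreover have "inner g v \<le> \<kappa>f * norm v"
    using norm_cauchy_schwarz[of g v] g by (meson mult_right_mono norm_ge_zero order_trans)
  ultimately show ?thesis
    using decrease pythagoras by (simp add: inner_add_right algebra_simps)
qed

theorem lemma3p7:
  fixes f :: "real^'n \<Rightarrow> real" and r :: "real^'n \<Rightarrow> real"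
    and c :: "real^'n \<Rightarrow> real^'m" and g :: "real^'n \<Rightarrow> real^'n"
    and J :: "real^'n \<Rightarrow> real^'n^'m"
    and x v u s :: "nat \<Rightarrow> real^'n" and \<alpha> \<tau> :: "nat \<Rightarrow> real"
    and \<tau>m1 \<kappa>v \<sigma>c \<epsilon>\<tau> \<xi> \<eta> \<sigma>u \<kappa>f \<kappa>r :: real
    and X :: "(real^'n) set"
  defines "\<sigma>bar \<equiv> \<sigma>u + 1/2"
  assumes mn: "CARD('m) \<le> CARD('n)"
    \<comment> \<open>problem data\<close>
    and f_deriv: "\<And>y. (f has_derivative (\<lambda>h. inner (g y) h)) (at y)"
    and g_cont: "continuous_on UNIV g"
    and c_deriv: "\<And>y. (c has_derivative (\<lambda>h. J y *v h)) (at y)"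
    and J_cont: "continuous_on UNIV J"
    and r_convex: "convex_on UNIV r"
    and r_nonneg: "\<And>y. r y \<ge> 0"
    \<comment> \<open>constants\<close>
    and \<kappa>v_pos: "\<kappa>v > 0"
    and \<sigma>c: "0 < \<sigma>c" "\<sigma>c < 1" and \<epsilon>\<tau>: "0 < \<epsilon>\<tau>" "\<epsilon>\<tau> < 1"
    and \<xi>: "0 < \<xi>" "\<xi> < 1" and \<eta>: "0 < \<eta>" "\<eta> < 1"
    and \<sigma>u: "0 < \<sigma>u" "\<sigma>u \<le> 1/2"
    and \<alpha>0: "\<alpha> 0 > 0" and \<tau>m1: "\<tau>m1 > 0"
    \<comment> \<open>step 1 (with nontermination: if J_k^T c_k = 0 then c_k = 0)\<close>
    and step1: "\<And>k. transpose (J (x k)) *v c (x k) \<noteq> 0 \<Longrightarrow>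
        (\<exists>y. v k = transpose (J (x k)) *v y)
        \<and> norm (v k) \<le> \<kappa>v * \<alpha> k * norm (transpose (J (x k)) *v c (x k))
        \<and> (\<exists>\<beta>c. 0 \<le> \<beta>c \<and> \<beta>c \<le> \<kappa>v * \<alpha> k
              \<and> (\<forall>\<beta>. 0 \<le> \<beta> \<and> \<beta> \<le> \<kappa>v * \<alpha> k \<longrightarrow>
                   (1/2) * (norm (c (x k) - \<beta> *\<^sub>R (J (x k) *v (transpose (J (x k)) *v c (x k)))))\<^sup>2
                   \<ge> (1/2) * (norm (c (x k) - \<beta>c *\<^sub>R (J (x k) *v (transpose (J (x k)) *v c (x k)))))\<^sup>2)
              \<and> norm (c (x k) + J (x k) *v v k)
                  \<le> norm (c (x k) + J (x k) *v (- \<beta>c *\<^sub>R (transpose (J (x k)) *v c (x k)))))"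
    and step1_zero: "\<And>k. transpose (J (x k)) *v c (x k) = 0 \<Longrightarrow> v k = 0 \<and> c (x k) = 0"
    \<comment> \<open>step 2 (with nontermination: s_k \<noteq> 0)\<close>
    and step2: "\<And>k. J (x k) *v u k = 0 \<and>
        (\<forall>w. J (x k) *v w = 0 \<longrightarrow>
           inner (g (x k)) (u k) + (1 / (2 * \<alpha> k)) * (norm (u k))\<^sup>2 + r (x k + v k + u k)
           \<le> inner (g (x k)) w + (1 / (2 * \<alpha> k)) * (norm w)\<^sup>2 + r (x k + v k + w))"
    and s_def: "\<And>k. s k = v k + u k"
    and s_nz: "\<And>k. s k \<noteq> 0"
    \<comment> \<open>step 3: merit parameter update; tau k is tau_k, tau_{-1} = \<tau>m1\<close>
    and step3: "\<And>k. let D = inner (g (x k)) (s k) + \<sigma>bar * (norm (s k))\<^sup>2 / \<alpha> k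
                            + r (x k + s k) - r (x k);
                     tprev = (if k = 0 then \<tau>m1 else \<tau> (k - 1));
                     trial = (1 - \<sigma>c) * (norm (c (x k)) - norm (c (x k) + J (x k) *v v k)) / D
                 in \<tau> k = (if D \<le> 0 \<or> tprev \<le> trial then tprev
                           else min ((1 - \<epsilon>\<tau>) * tprev) trial)"
    \<comment> \<open>step 4: acceptance test\<close>
    and step4: "\<And>k. if merit f r c (\<tau> k) (x k + s k)
                         \<le> merit f r c (\<tau> k) (x k)
                            - \<eta> * model_red r (x k) (g (x k)) (c (x k)) (J (x k)) (\<alpha> k) (s k) (\<tau> k)
                   then x (Suc k) = x k + s k \<and> \<alpha> (Suc k) = \<alpha> k
                   else x (Suc k) = x k \<and> \<alpha> (Suc k) = \<xi> * \<alpha> k"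
    \<comment> \<open>standing assumption\<close>
    and X_open: "open X" and X_convex: "convex X"
    and X_iter: "\<And>k. x k \<in> X" and X_trial: "\<And>k. x k + s k \<in> X"
    and f_bdd: "bdd_below (f ` X)"
    and \<kappa>f_pos: "\<kappa>f > 0" and g_bdd: "\<And>y. y \<in> X \<Longrightarrow> norm (g y) \<le> \<kappa>f"
    and g_lip: "\<exists>L. L-lipschitz_on X g"
    and c_bdd: "bounded (c ` X)" and J_bdd: "bounded (J ` X)"
    and J_lip: "\<exists>L. L-lipschitz_on X J"
    and \<kappa>r_pos: "\<kappa>r > 0"
    and subgrad_bdd: "\<And>y w. y \<in> X \<Longrightarrow> w \<in> subdiff r y \<Longrightarrow> norm w \<le> \<kappa>r"
  shows "\<forall>k. inner (g (x k)) (s k) + \<sigma>bar * (norm (s k))\<^sup>2 / \<alpha> k + r (x k + s k) - r (x k)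
             \<le> (\<kappa>f + \<kappa>r) * norm (v k) + \<sigma>bar * (norm (v k))\<^sup>2 / \<alpha> k"
proof
  fix k
  have \<alpha>_pos: "\<alpha> k > 0" for k
  proof (induction k)
    case 0 show ?case using \<alpha>0 .
  next
    case (Suc k) then show ?case using step4[of k] \<xi> by (auto split: if_splits)
  qed
  have v_orth_u: "inner (v k) (u k) = 0"
  proof (cases "transpose (J (x k)) *v c (x k) = 0")
    case True then show ?thesis using step1_zero by simp
  next
    case False
    then obtain y where "v k = transpose (J (x k)) *v y" using step1 by blast
    then show ?thesis
      using step2[of k] dot_lmul_matrix[of y "J (x k)" "u k"] by simp
  qed
  have "subspace {w. J (x k) *v w = 0}"
    by (rule linear_subspace_kernel[OF matrix_vector_mul_linear])
  moreover have "is_prox_minimizer {w. J (x k) *v w = 0} (g (x k)) (\<alpha> k) r (x k + v k) (u k)"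
    using step2[of k] by (simp add: is_prox_minimizer_def add.assoc)
  ultimately have "inner (g (x k)) (v k + u k) + \<sigma>bar * (norm (v k + u k))\<^sup>2 / \<alpha> k
      + r (x k + (v k + u k)) - r (x k) \<le> (\<kappa>f + \<kappa>r) * norm (v k) + \<sigma>bar * (norm (v k))\<^sup>2 / \<alpha> k"
    using prox_step_bound[OF r_convex X_open _ \<alpha>_pos] X_trial[of k] s_def subgrad_bdd v_orth_u
      g_bdd[OF X_iter] \<sigma>u
    unfolding \<sigma>bar_def by simp
  then show "inner (g (x k)) (s k) + \<sigma>bar * (norm (s k))\<^sup>2 / \<alpha> k + r (x k + s k) - r (x k)
        \<le> (\<kappa>f + \<kappa>r) * norm (v k) + \<sigma>bar * (norm (v k))\<^sup>2 / \<alpha> k"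
    by (simp add: s_def)
qed

end
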